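(* Let $G$ be a finite group and $N$ a normal subgroup with $1<N<G$ such that every $x\in G\setminus N$ is conjugate in $G$ to every element of $xN$ (i.e. $(G,N)$ is a Camina pair). Let $A=\{\chi_1,\dots,\chi_n\}$ be a set of non-trivial irreducible characters of $G$ such that (i) each $\chi_i$ vanishes on $G\setminus N$, and (ii) there exist positive integers $\alpha_1,\dots,\alpha_n$ such that $\sum_{i=1}^n\alpha_i\chi_i$ is constant on $N\setminus\{1\}$. Then $A=\mathrm{Irr}(G\mid N)$.
   Context: $\mathrm{Irr}(G)$ denotes the set of complex irreducible characters of $G$, and $\mathrm{Irr}(G\mid N)=\{\chi\in\mathrm{Irr}(G)\mid N\not\le\ker\chi\}$. *)

theory Defs
  imports "HOL-Algebra.Group" "HOL-Algebra.Coset" "Jordan_Normal_Form.Matrix"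
begin

definition is_rep :: "('a, 'b) monoid_scheme \<Rightarrow> nat \<Rightarrow> ('a \<Rightarrow> complex mat) \<Rightarrow> bool" where
  "is_rep G n \<rho> \<longleftrightarrow>
     (\<forall>g\<in>carrier G. \<rho> g \<in> carrier_mat n n) \<and>
     (\<forall>g\<in>carrier G. \<forall>h\<in>carrier G. \<rho> (g \<otimes>\<^bsub>G\<^esub> h) = \<rho> g * \<rho> h) \<and>
     \<rho> \<one>\<^bsub>G\<^esub> = 1\<^sub>m n"

definition is_subspace :: "nat \<Rightarrow> complex vec set \<Rightarrow> bool" where
  "is_subspace n W \<longleftrightarrow> W \<subseteq> carrier_vec n \<and> 0\<^sub>v n \<in> W \<and>
     (\<forall>v\<in>W. \<forall>w\<in>W. v + w \<in> W) \<and> (\<forall>c. \<forall>v\<in>W. c \<cdot>\<^sub>v v \<in> W)"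

definition irreducible_rep :: "('a, 'b) monoid_scheme \<Rightarrow> nat \<Rightarrow> ('a \<Rightarrow> complex mat) \<Rightarrow> bool" where
  "irreducible_rep G n \<rho> \<longleftrightarrow> is_rep G n \<rho> \<and> n > 0 \<and>
     (\<forall>W. is_subspace n W \<and> (\<forall>g\<in>carrier G. \<forall>w\<in>W. \<rho> g *\<^sub>v w \<in> W)
          \<longrightarrow> W = {0\<^sub>v n} \<or> W = carrier_vec n)"

definition mat_trace :: "complex mat \<Rightarrow> complex" where
  "mat_trace M = (\<Sum>i<dim_row M. M $$ (i, i))"

definition character_of :: "('a, 'b) monoid_scheme \<Rightarrow> ('a \<Rightarrow> complex mat) \<Rightarrow> 'a \<Rightarrow> complex" where
  "character_of G \<rho> = (\<lambda>g. if g \<in> carrier G then mat_trace (\<rho> g) else 0)"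

definition Irr :: "('a, 'b) monoid_scheme \<Rightarrow> ('a \<Rightarrow> complex) set" where
  "Irr G = {\<chi>. \<exists>n \<rho>. irreducible_rep G n \<rho> \<and> \<chi> = character_of G \<rho>}"

definition principal_char :: "('a, 'b) monoid_scheme \<Rightarrow> 'a \<Rightarrow> complex" where
  "principal_char G = (\<lambda>g. if g \<in> carrier G then 1 else 0)"

definition char_ker :: "('a, 'b) monoid_scheme \<Rightarrow> ('a \<Rightarrow> complex) \<Rightarrow> 'a set" where
  "char_ker G \<chi> = {g \<in> carrier G. \<chi> g = \<chi> \<one>\<^bsub>G\<^esub>}"

definition Irr_rel :: "('a, 'b) monoid_scheme \<Rightarrow> 'a set \<Rightarrow> ('a \<Rightarrow> complex) set" where
  "Irr_rel G N = {\<chi> \<in> Irr G. \<not> N \<subseteq> char_ker G \<chi>}"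

definition camina_pair :: "('a, 'b) monoid_scheme \<Rightarrow> 'a set \<Rightarrow> bool" where
  "camina_pair G N \<longleftrightarrow> N \<lhd> G \<and> N \<noteq> {\<one>\<^bsub>G\<^esub>} \<and> N \<noteq> carrier G \<and>
     (\<forall>x\<in>carrier G - N. \<forall>m\<in>N. \<exists>g\<in>carrier G.
        g \<otimes>\<^bsub>G\<^esub> x \<otimes>\<^bsub>G\<^esub> inv\<^bsub>G\<^esub> g = x \<otimes>\<^bsub>G\<^esub> m)"

end

theory Submission
  imports Defs "Jordan_Normal_Form.Spectral_Radius"
begin

text \<open>Put \<psi> = \<Sum>\<chi>\<in>A. \<alpha>(\<chi>) \<chi>. It vanishes off N and equals a constant c on N - {1}. If some
  \<theta> \<in> Irr(G|N) were not in A, the orthogonality relations would give \<langle>\<psi>, \<theta>\<rangle> = 0 and, since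
  \<theta> sums to 0 over N, this reads (\<psi>(1) - c) \<theta>(1) = 0. Orthogonality to the principal character
  gives \<psi>(1) + (|N| - 1) c = 0. Together c = \<psi>(1) = 0, whereas \<psi>(1) is a positive combination
  of degrees. Conversely, a non-principal \<chi> \<in> A sums to 0 over G, hence over N as it vanishes
  off N; were N in its kernel, that sum would be |N| \<chi>(1) \<noteq> 0.

  The character theory is derived from the matrix-level definitions: Schur's lemma via
  eigenvalues and invariant subspaces, the orthogonality relations by averaging
  \<rho>(g) X \<sigma>(g\<inverse>) over G.\<close>

section \<open>Matrices\<close>

lemma mult_mat_vec_zero:
  fixes T :: "'a :: semiring_0 mat"
  assumes "T \<in> carrier_mat n m"
  shows "T *\<^sub>v 0\<^sub>v m = 0\<^sub>v n"
  using assms by (intro eq_vecI) (auto simp: scalar_prod_def)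

lemma zero_mult_mat_vec:
  "(v :: 'a :: semiring_0 vec) \<in> carrier_vec m \<Longrightarrow> 0\<^sub>m n m *\<^sub>v v = 0\<^sub>v n"
  by (intro eq_vecI) (auto simp: scalar_prod_def)

lemma mult_mat_unit_vec:
  fixes A :: "'a :: semiring_1 mat"
  assumes "A \<in> carrier_mat n m" "i < n" "j < m"
  shows "(A *\<^sub>v unit_vec m j) $ i = A $$ (i, j)"
  using assms by (simp add: scalar_prod_def unit_vec_def if_distrib cong: if_cong)

lemma eq_mat_on_vecI:
  fixes A B :: "'a :: semiring_1 mat"
  assumes "A \<in> carrier_mat n m" "B \<in> carrier_mat n m"
    and "\<And>v. v \<in> carrier_vec m \<Longrightarrow> A *\<^sub>v v = B *\<^sub>v v"
  shows "A = B"
proof (rule eq_matI)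
  fix i j assume "i < dim_row B" "j < dim_col B"
  then have "i < n" "j < m" using assms by auto
  then show "A $$ (i, j) = B $$ (i, j)"
    using assms mult_mat_unit_vec[of A n m i j] mult_mat_unit_vec[of B n m i j] by simp
qed (use assms in auto)

lemma index_mult_mat_sum:
  assumes "A \<in> carrier_mat n k" "B \<in> carrier_mat k m" "i < n" "j < m"
  shows "(A * B) $$ (i, j) = (\<Sum>t<k. A $$ (i, t) * B $$ (t, j))"
  using assms by (simp add: scalar_prod_def atLeast0LessThan)

lemma mult_mat_vec_inj:
  fixes T :: "'a :: ring mat"
  assumes T: "T \<in> carrier_mat n m" and ker: "{v \<in> carrier_vec m. T *\<^sub>v v = 0\<^sub>v n} = {0\<^sub>v m}"
    and ab: "a \<in> carrier_vec m" "b \<in> carrier_vec m" "T *\<^sub>v a = T *\<^sub>v b"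
  shows "a = b"
proof -
  have "a - b \<in> {v \<in> carrier_vec m. T *\<^sub>v v = 0\<^sub>v n}"
    using T ab by (simp add: mult_minus_distrib_mat_vec)
  then have "a - b = 0\<^sub>v m" unfolding ker by simp
  show ?thesis
  proof (rule eq_vecI)
    fix i assume i: "i < dim_vec b"
    then have "(a - b) $ i = 0" using \<open>a - b = 0\<^sub>v m\<close> ab by simp
    then show "a $ i = b $ i" using ab i by simp
  qed (use ab in auto)
qed

lemma mat_inverse_if_bij:
  fixes T :: "'a :: ring_1 mat"
  assumes T: "T \<in> carrier_mat n m" and ker: "{v \<in> carrier_vec m. T *\<^sub>v v = 0\<^sub>v n} = {0\<^sub>v m}"
    and img: "(*\<^sub>v) T ` carrier_vec m = carrier_vec n"
  obtains S where "S \<in> carrier_mat m n" "T * S = 1\<^sub>m n" "S * T = 1\<^sub>m m"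
proof -
  define pre where "pre j = (SOME v. v \<in> carrier_vec m \<and> T *\<^sub>v v = unit_vec n j)" for j
  have pre: "pre j \<in> carrier_vec m \<and> T *\<^sub>v pre j = unit_vec n j" for j
  proof -
    have "unit_vec n j \<in> (*\<^sub>v) T ` carrier_vec m" using img by simp
    then have "\<exists>v. v \<in> carrier_vec m \<and> T *\<^sub>v v = unit_vec n j" by force
    then show ?thesis unfolding pre_def by (rule someI_ex)
  qed
  define S where "S = mat m n (\<lambda>(i, j). pre j $ i)"
  have S: "S \<in> carrier_mat m n" by (simp add: S_def)
  have TS: "T * S = 1\<^sub>m n"
  proof (rule eq_matI)
    fix i j assume "i < dim_row (1\<^sub>m n :: 'a mat)" "j < dim_col (1\<^sub>m n :: 'a mat)"
    then have ij: "i < n" "j < n" by auto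
    have "col S j = pre j" using pre[of j] ij by (intro eq_vecI) (auto simp: S_def)
    then have "(T * S) $$ (i, j) = (T *\<^sub>v pre j) $ i" using T S ij by simp
    then show "(T * S) $$ (i, j) = 1\<^sub>m n $$ (i, j)" using pre[of j] ij by simp
  qed (use T S in auto)
  have "S * T = 1\<^sub>m m"
  proof (rule eq_mat_on_vecI)
    fix x :: "'a vec" assume x: "x \<in> carrier_vec m"
    have "T *\<^sub>v ((S * T) *\<^sub>v x) = (T * S) *\<^sub>v (T *\<^sub>v x)" using T S x by simp
    also have "\<dots> = T *\<^sub>v x" using TS T x by simp
    finally have Tx: "T *\<^sub>v ((S * T) *\<^sub>v x) = T *\<^sub>v x" .
    have "(S * T) *\<^sub>v x = x" by (rule mult_mat_vec_inj[OF T ker _ x Tx]) (use S T x in simp)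
    then show "(S * T) *\<^sub>v x = 1\<^sub>m m *\<^sub>v x" using x by simp
  qed (use S T in auto)
  with S TS show thesis by (rule that)
qed

lemma mat_trace_one_mat: "mat_trace (1\<^sub>m n) = of_nat n"
  by (simp add: mat_trace_def)

lemma mat_trace_comm:
  fixes A B :: "complex mat"
  assumes "A \<in> carrier_mat n m" "B \<in> carrier_mat m n"
  shows "mat_trace (A * B) = mat_trace (B * A)"
proof -
  have "mat_trace (A * B) = (\<Sum>i<n. \<Sum>t<m. A $$ (i, t) * B $$ (t, i))"
    using assms by (simp add: mat_trace_def scalar_prod_def atLeast0LessThan)
  also have "\<dots> = (\<Sum>t<m. \<Sum>i<n. B $$ (t, i) * A $$ (i, t))"
    by (subst sum.swap) (simp add: mult.commute)
  also have "\<dots> = mat_trace (B * A)"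
    using assms by (simp add: mat_trace_def scalar_prod_def atLeast0LessThan)
  finally show ?thesis .
qed

lemma mat_trace_intertwined:
  fixes A B T S :: "complex mat"
  assumes "A \<in> carrier_mat n n" "B \<in> carrier_mat m m" "T \<in> carrier_mat n m" "S \<in> carrier_mat m n"
    and "T * S = 1\<^sub>m n" "S * T = 1\<^sub>m m" and "A * T = T * B"
  shows "mat_trace A = mat_trace B"
proof -
  have "A = A * (T * S)" using assms(1,5) by simp
  also have "\<dots> = (A * T) * S" using assms(1,3,4) by (rule assoc_mult_mat[symmetric])
  also have "\<dots> = T * (B * S)" unfolding assms(7) using assms(3,2,4) by (rule assoc_mult_mat)
  finally have "mat_trace A = mat_trace ((B * S) * T)"
    using assms(2-4) mat_trace_comm[of T n m "B * S"] by simp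
  also have "(B * S) * T = B" using assms(2-4,6) by (simp add: assoc_mult_mat[of B m m S n T m])
  finally show ?thesis .
qed

lemma is_subspace_image:
  fixes T :: "complex mat"
  assumes T: "T \<in> carrier_mat n m"
  shows "is_subspace n ((*\<^sub>v) T ` carrier_vec m)"
  unfolding is_subspace_def
proof (intro conjI ballI allI)
  show "0\<^sub>v n \<in> (*\<^sub>v) T ` carrier_vec m"
    using mult_mat_vec_zero[OF T] by (metis image_eqI zero_carrier_vec)
  fix v w assume "v \<in> (*\<^sub>v) T ` carrier_vec m" "w \<in> (*\<^sub>v) T ` carrier_vec m"
  then obtain a b where "a \<in> carrier_vec m" "b \<in> carrier_vec m" "v = T *\<^sub>v a" "w = T *\<^sub>v b"
    by auto
  with T show "v + w \<in> (*\<^sub>v) T ` carrier_vec m"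
    by (metis add_carrier_vec image_eqI mult_add_distrib_mat_vec)
next
  fix c v assume "v \<in> (*\<^sub>v) T ` carrier_vec m"
  then obtain a where "a \<in> carrier_vec m" "v = T *\<^sub>v a" by auto
  with T show "c \<cdot>\<^sub>v v \<in> (*\<^sub>v) T ` carrier_vec m"
    by (metis image_eqI mult_mat_vec smult_carrier_vec)
qed (use T in auto)

lemma is_subspace_kernel:
  fixes T :: "complex mat"
  assumes T: "T \<in> carrier_mat n m"
  shows "is_subspace m {v \<in> carrier_vec m. T *\<^sub>v v = 0\<^sub>v n}"
  unfolding is_subspace_def
proof (intro conjI ballI allI)
  fix c v assume "v \<in> {v \<in> carrier_vec m. T *\<^sub>v v = 0\<^sub>v n}"
  with T show "c \<cdot>\<^sub>v v \<in> {v \<in> carrier_vec m. T *\<^sub>v v = 0\<^sub>v n}"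
    by (auto simp: mult_mat_vec)
qed (use T in \<open>auto simp: mult_mat_vec_zero mult_add_distrib_mat_vec\<close>)

lemma is_subspace_dim_one:
  assumes W: "is_subspace 1 W"
  shows "W = {0\<^sub>v 1} \<or> W = carrier_vec 1"
proof (cases "W = {0\<^sub>v 1}")
  case False
  then obtain w where w: "w \<in> W" "w \<noteq> 0\<^sub>v 1" using W by (auto simp: is_subspace_def)
  then have w1: "w \<in> carrier_vec 1" using W by (auto simp: is_subspace_def)
  then have "w $ 0 \<noteq> 0" using w(2) by (auto simp: vec_eq_iff)
  have "v \<in> W" if v: "v \<in> carrier_vec 1" for v
  proof -
    have "v = (v $ 0 / w $ 0) \<cdot>\<^sub>v w" using v w1 \<open>w $ 0 \<noteq> 0\<close> by (auto simp: vec_eq_iff)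
    then show ?thesis using W w(1) unfolding is_subspace_def by metis
  qed
  then have "W = carrier_vec 1" using W by (auto simp: is_subspace_def)
  then show ?thesis ..
qed simp

definition single_entry_mat :: "nat \<Rightarrow> nat \<Rightarrow> nat \<Rightarrow> nat \<Rightarrow> 'a :: zero_neq_one mat" where
  "single_entry_mat n m j k = mat n m (\<lambda>(a, b). if a = j \<and> b = k then 1 else 0)"

lemma single_entry_mat_carrier [simp]: "single_entry_mat n m j k \<in> carrier_mat n m"
  by (simp add: single_entry_mat_def)

lemma index_mult_single_entry_mat:
  fixes A :: "'a :: semiring_1 mat"
  assumes A: "A \<in> carrier_mat p n" and B: "B \<in> carrier_mat m q"
    and "i < p" "l < q" "j < n" "k < m"
  shows "(A * single_entry_mat n m j k * B) $$ (i, l) = A $$ (i, j) * B $$ (k, l)"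
proof -
  let ?E = "single_entry_mat n m j k"
  have E: "?E \<in> carrier_mat n m" by (simp add: single_entry_mat_def)
  have AE: "(A * ?E) $$ (i, b) = (if b = k then A $$ (i, j) else 0)" if "b < m" for b
  proof -
    have "(A * ?E) $$ (i, b) = (\<Sum>t<n. A $$ (i, t) * ?E $$ (t, b))"
      using assms that by (intro index_mult_mat_sum[OF A E])
    also have "\<dots> = (\<Sum>t<n. if t = j then (if b = k then A $$ (i, j) else 0) else 0)"
      using that by (intro sum.cong) (auto simp: single_entry_mat_def)
    finally show ?thesis using assms by simp
  qed
  have "(A * ?E * B) $$ (i, l) = (\<Sum>b<m. (A * ?E) $$ (i, b) * B $$ (b, l))"
    using assms E by (intro index_mult_mat_sum) auto
  also have "\<dots> = (\<Sum>b<m. if b = k then A $$ (i, j) * B $$ (b, l) else 0)"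
    using AE by (intro sum.cong) auto
  finally show ?thesis using assms by simp
qed

lemma mat_trace_single_entry_mat:
  "j < n \<Longrightarrow> k < n \<Longrightarrow> mat_trace (single_entry_mat n n j k) = (if j = k then 1 else 0)"
  by (simp add: mat_trace_def single_entry_mat_def)

text \<open>Matrices carry their dimensions and so do not form a monoid under addition; finite sums of
  n \<times> m matrices are therefore taken entrywise.\<close>
definition mat_sum :: "nat \<Rightarrow> nat \<Rightarrow> ('i \<Rightarrow> 'a :: comm_monoid_add mat) \<Rightarrow> 'i set \<Rightarrow> 'a mat" where
  "mat_sum n m F S = mat n m (\<lambda>ij. \<Sum>s\<in>S. F s $$ ij)"

lemma mat_sum_carrier [simp]: "mat_sum n m F S \<in> carrier_mat n m"
  by (simp add: mat_sum_def)

lemma mat_sum_cong: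
  "(\<And>s. s \<in> S \<Longrightarrow> F s = F' s) \<Longrightarrow> mat_sum n m F S = mat_sum n m F' S"
  by (simp add: mat_sum_def)

lemma mat_sum_reindex_bij_betw:
  "bij_betw f S T \<Longrightarrow> mat_sum n m (\<lambda>s. F (f s)) S = mat_sum n m F T"
  unfolding mat_sum_def by (rule arg_cong[of _ _ "mat n m"], rule ext, rule sum.reindex_bij_betw)

lemma mult_mat_sum_left:
  fixes A :: "'a :: semiring_0 mat"
  assumes "A \<in> carrier_mat k n" "\<And>s. s \<in> S \<Longrightarrow> F s \<in> carrier_mat n m"
  shows "A * mat_sum n m F S = mat_sum k m (\<lambda>s. A * F s) S"
proof (rule eq_matI)
  fix i j assume "i < dim_row (mat_sum k m (\<lambda>s. A * F s) S)" "j < dim_col (mat_sum k m (\<lambda>s. A * F s) S)"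
  then have ij: "i < k" "j < m" by (auto simp: mat_sum_def)
  have "(A * mat_sum n m F S) $$ (i, j) = (\<Sum>t<n. \<Sum>s\<in>S. A $$ (i, t) * F s $$ (t, j))"
    using assms ij by (simp add: mat_sum_def scalar_prod_def sum_distrib_left atLeast0LessThan)
  also have "\<dots> = (\<Sum>s\<in>S. \<Sum>t<n. A $$ (i, t) * F s $$ (t, j))" by (rule sum.swap)
  also have "\<dots> = (\<Sum>s\<in>S. (A * F s) $$ (i, j))"
    by (intro sum.cong refl index_mult_mat_sum[symmetric]) (use assms ij in auto)
  finally show "(A * mat_sum n m F S) $$ (i, j) = mat_sum k m (\<lambda>s. A * F s) S $$ (i, j)"
    using ij by (simp add: mat_sum_def)
qed (use assms in \<open>auto simp: mat_sum_def\<close>)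

lemma mult_mat_sum_right:
  fixes B :: "'a :: semiring_0 mat"
  assumes "B \<in> carrier_mat m k" "\<And>s. s \<in> S \<Longrightarrow> F s \<in> carrier_mat n m"
  shows "mat_sum n m F S * B = mat_sum n k (\<lambda>s. F s * B) S"
proof (rule eq_matI)
  fix i j assume "i < dim_row (mat_sum n k (\<lambda>s. F s * B) S)" "j < dim_col (mat_sum n k (\<lambda>s. F s * B) S)"
  then have ij: "i < n" "j < k" by (auto simp: mat_sum_def)
  have "(mat_sum n m F S * B) $$ (i, j) = (\<Sum>t<m. \<Sum>s\<in>S. F s $$ (i, t) * B $$ (t, j))"
    using assms ij by (simp add: mat_sum_def scalar_prod_def sum_distrib_right atLeast0LessThan)
  also have "\<dots> = (\<Sum>s\<in>S. \<Sum>t<m. F s $$ (i, t) * B $$ (t, j))" by (rule sum.swap)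
  also have "\<dots> = (\<Sum>s\<in>S. (F s * B) $$ (i, j))"
    by (intro sum.cong refl index_mult_mat_sum[symmetric]) (use assms ij in auto)
  finally show "(mat_sum n m F S * B) $$ (i, j) = mat_sum n k (\<lambda>s. F s * B) S $$ (i, j)"
    using ij by (simp add: mat_sum_def)
qed (use assms in \<open>auto simp: mat_sum_def\<close>)

lemma mat_trace_mat_sum:
  assumes "\<And>s. s \<in> S \<Longrightarrow> F s \<in> carrier_mat n n"
  shows "mat_trace (mat_sum n n F S) = (\<Sum>s\<in>S. mat_trace (F s))"
proof -
  have "mat_trace (mat_sum n n F S) = (\<Sum>i<n. \<Sum>s\<in>S. F s $$ (i, i))"
    by (simp add: mat_trace_def mat_sum_def)
  also have "\<dots> = (\<Sum>s\<in>S. mat_trace (F s))"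
    using assms by (subst sum.swap) (auto simp: mat_trace_def intro!: sum.cong)
  finally show ?thesis .
qed

section \<open>Representations and Schur's lemma\<close>

lemma is_rep_carrier: "is_rep G n \<rho> \<Longrightarrow> g \<in> carrier G \<Longrightarrow> \<rho> g \<in> carrier_mat n n"
  by (simp add: is_rep_def)

lemma is_rep_mult:
  "is_rep G n \<rho> \<Longrightarrow> g \<in> carrier G \<Longrightarrow> h \<in> carrier G \<Longrightarrow> \<rho> (g \<otimes>\<^bsub>G\<^esub> h) = \<rho> g * \<rho> h"
  by (simp add: is_rep_def)

lemma is_rep_one: "is_rep G n \<rho> \<Longrightarrow> \<rho> \<one>\<^bsub>G\<^esub> = 1\<^sub>m n"
  by (simp add: is_rep_def)

lemma is_rep_inv_mult:
  assumes "group G" "is_rep G n \<rho>" "g \<in> carrier G"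
  shows "\<rho> (inv\<^bsub>G\<^esub> g) * \<rho> g = 1\<^sub>m n"
  using assms is_rep_mult[OF assms(2), of "inv\<^bsub>G\<^esub> g" g]
  by (simp add: is_rep_one group.l_inv group.inv_closed)

lemma character_of_one:
  "group G \<Longrightarrow> is_rep G n \<rho> \<Longrightarrow> character_of G \<rho> \<one>\<^bsub>G\<^esub> = of_nat n"
  by (simp add: character_of_def is_rep_one mat_trace_one_mat group.is_monoid monoid.one_closed)

lemma character_of_eq:
  assumes "is_rep G n \<rho>" "g \<in> carrier G"
  shows "character_of G \<rho> g = (\<Sum>i<n. \<rho> g $$ (i, i))"
  using carrier_matD[OF is_rep_carrier[OF assms]] assms(2) by (simp add: character_of_def mat_trace_def)

lemma irreducible_rep_invariant_subspace:
  assumes "irreducible_rep G n \<rho>" "is_subspace n W" "\<forall>g\<in>carrier G. \<forall>w\<in>W. \<rho> g *\<^sub>v w \<in> W"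
  shows "W = {0\<^sub>v n} \<or> W = carrier_vec n"
  using assms by (simp add: irreducible_rep_def)

lemma intertwiner_image_invariant:
  assumes "is_rep G n \<rho>" "is_rep G m \<sigma>" "T \<in> carrier_mat n m"
    and "\<forall>g\<in>carrier G. \<rho> g * T = T * \<sigma> g" "g \<in> carrier G" "w \<in> (*\<^sub>v) T ` carrier_vec m"
  shows "\<rho> g *\<^sub>v w \<in> (*\<^sub>v) T ` carrier_vec m"
proof -
  obtain v where v: "v \<in> carrier_vec m" "w = T *\<^sub>v v" using assms(6) by blast
  have \<rho>g: "\<rho> g \<in> carrier_mat n n" and \<sigma>g: "\<sigma> g \<in> carrier_mat m m"
    using assms by (auto simp: is_rep_carrier)
  have "\<rho> g *\<^sub>v w = (\<rho> g * T) *\<^sub>v v" using \<rho>g assms(3) v by simp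
  also have "\<dots> = T *\<^sub>v (\<sigma> g *\<^sub>v v)" using assms(3-5) \<sigma>g v by simp
  finally show ?thesis using \<sigma>g v by simp
qed

lemma intertwiner_kernel_invariant:
  assumes "is_rep G n \<rho>" "is_rep G m \<sigma>" "T \<in> carrier_mat n m"
    and "\<forall>g\<in>carrier G. \<rho> g * T = T * \<sigma> g" "g \<in> carrier G"
    and "w \<in> {v \<in> carrier_vec m. T *\<^sub>v v = 0\<^sub>v n}"
  shows "\<sigma> g *\<^sub>v w \<in> {v \<in> carrier_vec m. T *\<^sub>v v = 0\<^sub>v n}"
proof -
  have w: "w \<in> carrier_vec m" "T *\<^sub>v w = 0\<^sub>v n" using assms(6) by auto
  have \<rho>g: "\<rho> g \<in> carrier_mat n n" and \<sigma>g: "\<sigma> g \<in> carrier_mat m m"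
    using assms by (auto simp: is_rep_carrier)
  have "T *\<^sub>v (\<sigma> g *\<^sub>v w) = (T * \<sigma> g) *\<^sub>v w" using \<sigma>g assms(3) w by simp
  also have "\<dots> = \<rho> g *\<^sub>v (T *\<^sub>v w)" using assms(3-5) \<rho>g w by (metis assoc_mult_mat_vec)
  also have "\<dots> = 0\<^sub>v n" using \<rho>g w by (simp add: mult_mat_vec_zero)
  finally show ?thesis using \<sigma>g w by simp
qed

lemma intertwiner_zero_or_character_eq:
  assumes irr\<rho>: "irreducible_rep G n \<rho>" and irr\<sigma>: "irreducible_rep G m \<sigma>"
    and T: "T \<in> carrier_mat n m" and comm: "\<forall>g\<in>carrier G. \<rho> g * T = T * \<sigma> g"
  shows "T = 0\<^sub>m n m \<or> character_of G \<rho> = character_of G \<sigma>"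
proof (cases "T = 0\<^sub>m n m")
  case False
  have \<rho>: "is_rep G n \<rho>" and \<sigma>: "is_rep G m \<sigma>"
    using irr\<rho> irr\<sigma> by (auto simp: irreducible_rep_def)
  let ?K = "{v \<in> carrier_vec m. T *\<^sub>v v = 0\<^sub>v n}" and ?W = "(*\<^sub>v) T ` carrier_vec m"
  have "?K = {0\<^sub>v m} \<or> ?K = carrier_vec m"
    using irreducible_rep_invariant_subspace[OF irr\<sigma> is_subspace_kernel[OF T]]
      intertwiner_kernel_invariant[OF \<rho> \<sigma> T comm] by blast
  moreover have "?K \<noteq> carrier_vec m"
    using False eq_mat_on_vecI[OF T zero_carrier_mat] zero_mult_mat_vec by force
  ultimately have K: "?K = {0\<^sub>v m}" by blast
  have "?W = {0\<^sub>v n} \<or> ?W = carrier_vec n"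
    using irreducible_rep_invariant_subspace[OF irr\<rho> is_subspace_image[OF T]]
      intertwiner_image_invariant[OF \<rho> \<sigma> T comm] by blast
  moreover have "?W \<noteq> {0\<^sub>v n}"
    using False eq_mat_on_vecI[OF T zero_carrier_mat] zero_mult_mat_vec by force
  ultimately have W: "?W = carrier_vec n" by blast
  obtain S where S: "S \<in> carrier_mat m n" "T * S = 1\<^sub>m n" "S * T = 1\<^sub>m m"
    using mat_inverse_if_bij[OF T K W] .
  have "mat_trace (\<rho> g) = mat_trace (\<sigma> g)" if "g \<in> carrier G" for g
    using mat_trace_intertwined[OF is_rep_carrier[OF \<rho> that] is_rep_carrier[OF \<sigma> that] T S]
      comm that by blast
  then have "character_of G \<rho> = character_of G \<sigma>" by (intro ext) (simp add: character_of_def)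
  then show ?thesis ..
qed simp

lemma intertwiner_scalar:
  assumes irr: "irreducible_rep G n \<rho>"
    and T: "T \<in> carrier_mat n n" and comm: "\<forall>g\<in>carrier G. \<rho> g * T = T * \<rho> g"
  obtains c where "T = c \<cdot>\<^sub>m 1\<^sub>m n"
proof -
  have \<rho>: "is_rep G n \<rho>" and "n > 0" using irr by (auto simp: irreducible_rep_def)
  then obtain c where "eigenvalue T c"
    using spectrum_non_empty[OF T] by (auto simp: spectrum_def)
  then obtain v where v: "v \<in> carrier_vec n" "v \<noteq> 0\<^sub>v n" "T *\<^sub>v v = c \<cdot>\<^sub>v v"
    using T by (auto simp: eigenvalue_def eigenvector_def)
  define D where "D = T - c \<cdot>\<^sub>m 1\<^sub>m n"
  have D: "D \<in> carrier_mat n n" using T by (simp add: D_def minus_carrier_mat)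
  have Dcomm: "\<rho> g * D = D * \<rho> g" if g: "g \<in> carrier G" for g
  proof -
    have \<rho>g: "\<rho> g \<in> carrier_mat n n" using is_rep_carrier[OF \<rho> g] .
    have "\<rho> g * D = \<rho> g * T - c \<cdot>\<^sub>m \<rho> g"
      using \<rho>g T by (simp add: D_def mult_minus_distrib_mat mult_smult_distrib[OF \<rho>g one_carrier_mat])
    also have "\<dots> = T * \<rho> g - c \<cdot>\<^sub>m \<rho> g" using comm g by simp
    also have "\<dots> = D * \<rho> g"
      using \<rho>g T by (simp add: D_def minus_mult_distrib_mat mult_smult_assoc_mat[OF one_carrier_mat \<rho>g])
    finally show ?thesis .
  qed
  let ?K = "{w \<in> carrier_vec n. D *\<^sub>v w = 0\<^sub>v n}"
  have "?K = {0\<^sub>v n} \<or> ?K = carrier_vec n"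
    using irreducible_rep_invariant_subspace[OF irr is_subspace_kernel[OF D]]
      intertwiner_kernel_invariant[OF \<rho> \<rho> D] Dcomm by blast
  moreover have "v \<in> ?K"
    using v T by (auto simp: D_def minus_mult_distrib_mat_vec)
  ultimately have K: "?K = carrier_vec n" using v(2) by blast
  have "D = 0\<^sub>m n n"
    using K by (intro eq_mat_on_vecI[OF D]) (auto simp: zero_mult_mat_vec)
  have "T = c \<cdot>\<^sub>m 1\<^sub>m n"
  proof (rule eq_matI)
    fix i j assume ij: "i < dim_row (c \<cdot>\<^sub>m 1\<^sub>m n)" "j < dim_col (c \<cdot>\<^sub>m 1\<^sub>m n)"
    then have "D $$ (i, j) = 0" using \<open>D = 0\<^sub>m n n\<close> by simp
    then show "T $$ (i, j) = (c \<cdot>\<^sub>m 1\<^sub>m n) $$ (i, j)" using T ij by (simp add: D_def)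
  qed (use T in auto)
  then show thesis by (rule that)
qed

section \<open>Orthogonality of irreducible characters\<close>

lemma (in group) bij_betw_mult_left_subgroup:
  assumes "subgroup H G" "h \<in> H"
  shows "bij_betw (\<lambda>x. h \<otimes> x) H H"
proof -
  interpret subgroup H G by fact
  show ?thesis
    using assms(2) by (intro bij_betwI[where g="\<lambda>x. inv h \<otimes> x"]) (auto simp: m_assoc[symmetric])
qed

definition rep_average ::
  "('a, 'b) monoid_scheme \<Rightarrow> nat \<Rightarrow> nat \<Rightarrow> ('a \<Rightarrow> complex mat) \<Rightarrow> ('a \<Rightarrow> complex mat) \<Rightarrow> complex mat \<Rightarrow> complex mat"
  where "rep_average G n m \<rho> \<sigma> X = mat_sum n m (\<lambda>g. \<rho> g * X * \<sigma> (inv\<^bsub>G\<^esub> g)) (carrier G)"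

lemma rep_average_carrier [simp]: "rep_average G n m \<rho> \<sigma> X \<in> carrier_mat n m"
  by (simp add: rep_average_def)

lemma rep_mult_sandwich:
  fixes G (structure)
  assumes "group G" "is_rep G n \<rho>" "is_rep G m \<sigma>" "X \<in> carrier_mat n m"
    and h: "h \<in> carrier G" and g: "g \<in> carrier G"
  shows "\<rho> h * (\<rho> g * X * \<sigma> (inv g)) = \<rho> (h \<otimes> g) * X * \<sigma> (inv (h \<otimes> g)) * \<sigma> h"
proof -
  interpret group G by fact
  let ?y = "inv (h \<otimes> g)"
  have \<rho>h: "\<rho> h \<in> carrier_mat n n" and \<rho>g: "\<rho> g \<in> carrier_mat n n"
    and \<sigma>h: "\<sigma> h \<in> carrier_mat m m" and \<sigma>y: "\<sigma> ?y \<in> carrier_mat m m"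
    using assms g by (auto simp: is_rep_carrier)
  have "inv g = ?y \<otimes> h" using assms g by (simp add: inv_mult_group m_assoc)
  then have "\<rho> h * (\<rho> g * X * \<sigma> (inv g)) = \<rho> h * ((\<rho> g * X) * (\<sigma> ?y * \<sigma> h))"
    using assms g by (simp add: is_rep_mult)
  also have "\<dots> = (\<rho> h * (\<rho> g * X)) * (\<sigma> ?y * \<sigma> h)"
    using \<rho>h \<rho>g \<sigma>h \<sigma>y assms(4) by (simp add: assoc_mult_mat[of _ n n _ m _ m])
  also have "\<dots> = ((\<rho> h * \<rho> g) * X) * (\<sigma> ?y * \<sigma> h)"
    using \<rho>h \<rho>g assms(4) by (simp add: assoc_mult_mat[of _ n n _ n _ m])
  also have "\<dots> = (((\<rho> h * \<rho> g) * X) * \<sigma> ?y) * \<sigma> h"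
    using \<rho>h \<rho>g \<sigma>h \<sigma>y assms(4) by (simp add: assoc_mult_mat[of _ n m _ m _ m])
  also have "\<dots> = \<rho> (h \<otimes> g) * X * \<sigma> ?y * \<sigma> h"
    using assms g by (simp add: is_rep_mult)
  finally show ?thesis .
qed

lemma rep_average_intertwines:
  fixes G (structure)
  assumes "group G" "is_rep G n \<rho>" "is_rep G m \<sigma>" "X \<in> carrier_mat n m" "h \<in> carrier G"
  shows "\<rho> h * rep_average G n m \<rho> \<sigma> X = rep_average G n m \<rho> \<sigma> X * \<sigma> h"
proof -
  interpret group G by fact
  let ?F = "\<lambda>g. \<rho> g * X * \<sigma> (inv g)"
  have F: "?F g \<in> carrier_mat n m" if "g \<in> carrier G" for g
    using is_rep_carrier[OF assms(2) that] assms(4) is_rep_carrier[OF assms(3) inv_closed[OF that]]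
    by (intro mult_carrier_mat)
  have "\<rho> h * rep_average G n m \<rho> \<sigma> X = mat_sum n m (\<lambda>g. ?F (h \<otimes> g) * \<sigma> h) (carrier G)"
    unfolding rep_average_def using assms F rep_mult_sandwich[OF assms(1-5)]
    by (simp add: mult_mat_sum_left[of _ n n] is_rep_carrier cong: mat_sum_cong)
  also have "\<dots> = mat_sum n m (\<lambda>g. ?F g * \<sigma> h) (carrier G)"
    using bij_betw_mult_left_subgroup[OF subgroup_self assms(5)]
    by (rule mat_sum_reindex_bij_betw)
  also have "\<dots> = rep_average G n m \<rho> \<sigma> X * \<sigma> h"
    unfolding rep_average_def using assms F
    by (simp add: mult_mat_sum_right[of _ m m] is_rep_carrier)
  finally show ?thesis .
qed

lemma mat_trace_rep_average:
  fixes G (structure)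
  assumes "group G" "is_rep G n \<rho>" "X \<in> carrier_mat n n"
  shows "mat_trace (rep_average G n n \<rho> \<rho> X) = of_nat (card (carrier G)) * mat_trace X"
proof -
  interpret group G by fact
  have "mat_trace (\<rho> g * X * \<rho> (inv g)) = mat_trace X" if g: "g \<in> carrier G" for g
  proof -
    have \<rho>g: "\<rho> g \<in> carrier_mat n n" and \<rho>g': "\<rho> (inv g) \<in> carrier_mat n n"
      using assms g by (auto simp: is_rep_carrier)
    have "mat_trace (\<rho> g * X * \<rho> (inv g)) = mat_trace (X * \<rho> (inv g) * \<rho> g)"
      using mat_trace_comm[of "\<rho> g" n n "X * \<rho> (inv g)"] \<rho>g \<rho>g' assms(3)
      by (simp add: assoc_mult_mat[of _ n n _ n _ n])
    also have "\<dots> = mat_trace X"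
      using \<rho>g \<rho>g' assms is_rep_inv_mult[OF assms(1,2) g]
      by (simp add: assoc_mult_mat[of _ n n _ n _ n])
    finally show ?thesis .
  qed
  moreover have "\<rho> g * X * \<rho> (inv g) \<in> carrier_mat n n" if "g \<in> carrier G" for g
    using is_rep_carrier[OF assms(2) that] assms(3) is_rep_carrier[OF assms(2) inv_closed[OF that]]
    by (intro mult_carrier_mat)
  ultimately show ?thesis by (simp add: rep_average_def mat_trace_mat_sum)
qed

lemma sum_character_mult_inv_eq_rep_average:
  fixes G (structure)
  assumes "group G" "is_rep G n \<rho>" "is_rep G m \<sigma>"
  shows "(\<Sum>g\<in>carrier G. character_of G \<rho> g * character_of G \<sigma> (inv g))
    = (\<Sum>i<n. \<Sum>k<m. rep_average G n m \<rho> \<sigma> (single_entry_mat n m i k) $$ (i, k))"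
proof -
  interpret group G by fact
  have "rep_average G n m \<rho> \<sigma> (single_entry_mat n m i k) $$ (i, k)
      = (\<Sum>g\<in>carrier G. \<rho> g $$ (i, i) * \<sigma> (inv g) $$ (k, k))" if "i < n" "k < m" for i k
    using assms that
    by (auto simp: rep_average_def mat_sum_def is_rep_carrier
        intro!: sum.cong index_mult_single_entry_mat)
  then have "(\<Sum>i<n. \<Sum>k<m. rep_average G n m \<rho> \<sigma> (single_entry_mat n m i k) $$ (i, k))
      = (\<Sum>g\<in>carrier G. (\<Sum>i<n. \<rho> g $$ (i, i)) * (\<Sum>k<m. \<sigma> (inv g) $$ (k, k)))"
    by (simp add: sum_product sum.swap[of _ "carrier G"])
  also have "\<dots> = (\<Sum>g\<in>carrier G. character_of G \<rho> g * character_of G \<sigma> (inv g))"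
    by (intro sum.cong) (simp_all add: character_of_eq[OF assms(2)] character_of_eq[OF assms(3)])
  finally show ?thesis by simp
qed

lemma sum_character_mult_inv_distinct:
  fixes G (structure)
  assumes "group G" and irr\<rho>: "irreducible_rep G n \<rho>" and irr\<sigma>: "irreducible_rep G m \<sigma>"
    and "character_of G \<rho> \<noteq> character_of G \<sigma>"
  shows "(\<Sum>g\<in>carrier G. character_of G \<rho> g * character_of G \<sigma> (inv g)) = 0"
proof -
  have \<rho>: "is_rep G n \<rho>" and \<sigma>: "is_rep G m \<sigma>" using irr\<rho> irr\<sigma> by (auto simp: irreducible_rep_def)
  have "rep_average G n m \<rho> \<sigma> (single_entry_mat n m i k) = 0\<^sub>m n m" for i k
    using intertwiner_zero_or_character_eq[OF irr\<rho> irr\<sigma> rep_average_carrier]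
      rep_average_intertwines[OF assms(1) \<rho> \<sigma> single_entry_mat_carrier] assms(4) by blast
  then show ?thesis
    by (simp add: sum_character_mult_inv_eq_rep_average[OF assms(1) \<rho> \<sigma>])
qed

lemma sum_character_mult_inv_self:
  fixes G (structure)
  assumes "group G" and irr: "irreducible_rep G n \<rho>"
  shows "(\<Sum>g\<in>carrier G. character_of G \<rho> g * character_of G \<rho> (inv g)) = of_nat (card (carrier G))"
proof -
  have \<rho>: "is_rep G n \<rho>" and n: "n > 0" using irr by (auto simp: irreducible_rep_def)
  have entry: "rep_average G n n \<rho> \<rho> (single_entry_mat n n i k) $$ (i, k)
      = (if i = k then of_nat (card (carrier G)) / of_nat n else 0)" if ik: "i < n" "k < n" for i k
  proof -
    let ?A = "rep_average G n n \<rho> \<rho> (single_entry_mat n n i k)"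
    obtain c where c: "?A = c \<cdot>\<^sub>m 1\<^sub>m n"
      using intertwiner_scalar[OF irr rep_average_carrier]
        rep_average_intertwines[OF assms(1) \<rho> \<rho> single_entry_mat_carrier] by blast
    have "of_nat n * c = mat_trace ?A" by (simp add: c mat_trace_def)
    also have "\<dots> = of_nat (card (carrier G)) * (if i = k then 1 else 0)"
      using ik by (simp add: mat_trace_rep_average[OF assms(1) \<rho>] mat_trace_single_entry_mat)
    finally show ?thesis using n ik c by (auto simp: field_simps)
  qed
  have "(\<Sum>i<n. \<Sum>k<n. rep_average G n n \<rho> \<rho> (single_entry_mat n n i k) $$ (i, k))
      = (\<Sum>i<n. of_nat (card (carrier G)) / (of_nat n :: complex))"
    by (intro sum.cong refl) (simp add: entry)
  also have "\<dots> = of_nat (card (carrier G))" using n by simp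
  finally show ?thesis by (simp add: sum_character_mult_inv_eq_rep_average[OF assms(1) \<rho> \<rho>])
qed

theorem Irr_orthogonality:
  fixes G (structure)
  assumes "group G" "\<chi> \<in> Irr G" "\<psi> \<in> Irr G"
  shows "(\<Sum>g\<in>carrier G. \<chi> g * \<psi> (inv g)) = (if \<chi> = \<psi> then of_nat (card (carrier G)) else 0)"
  using assms sum_character_mult_inv_self sum_character_mult_inv_distinct
  unfolding Irr_def by fastforce

lemma principal_char_Irr: "group G \<Longrightarrow> principal_char G \<in> Irr G"
  unfolding Irr_def
proof (intro CollectI exI conjI)
  show "irreducible_rep G 1 (\<lambda>_. 1\<^sub>m 1)"
    unfolding irreducible_rep_def is_rep_def using is_subspace_dim_one by auto
  show "principal_char G = character_of G (\<lambda>_. 1\<^sub>m 1)"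
    by (rule ext) (simp add: principal_char_def character_of_def mat_trace_one_mat)
qed

lemma sum_Irr_eq_zero:
  fixes G (structure)
  assumes "group G" "\<chi> \<in> Irr G" "\<chi> \<noteq> principal_char G"
  shows "(\<Sum>g\<in>carrier G. \<chi> g) = 0"
proof -
  have "(\<Sum>g\<in>carrier G. \<chi> g * principal_char G (inv g)) = 0"
    using Irr_orthogonality[OF assms(1,2) principal_char_Irr[OF assms(1)]] assms(3) by simp
  then show ?thesis by (simp add: principal_char_def group.inv_closed[OF assms(1)])
qed

lemma Irr_one_eq_of_nat:
  assumes "group G" "\<chi> \<in> Irr G"
  obtains d where "d > 0" "\<chi> \<one>\<^bsub>G\<^esub> = of_nat d"
proof -
  obtain n \<rho> where "irreducible_rep G n \<rho>" "\<chi> = character_of G \<rho>" using assms(2) by (auto simp: Irr_def)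
  then show thesis using that character_of_one[OF assms(1)] by (auto simp: irreducible_rep_def)
qed

text \<open>A biorthogonal family of length k in the functions on D forces k \<le> |D|: padding the k \<times> |D|
  matrices of values with zeros gives square matrices X, Y with XY = 1, but the row of Y indexed
  by |D| vanishes, so YX = 1 fails if k > |D|.\<close>
lemma card_ge_if_biorthogonal:
  fixes f g :: "nat \<Rightarrow> 'x \<Rightarrow> complex"
  assumes D: "finite D"
    and orth: "\<And>i j. i < k \<Longrightarrow> j < k \<Longrightarrow> (\<Sum>x\<in>D. f i x * g j x) = (if i = j then 1 else 0)"
  shows "k \<le> card D"
proof (rule ccontr)
  assume "\<not> k \<le> card D"
  define m where "m = card D"
  then have mk: "m < k" using \<open>\<not> k \<le> card D\<close> by simp
  obtain e where e: "bij_betw e {0..<m} D" using ex_bij_betw_nat_finite[OF D] m_def by blast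
  define X :: "complex mat" where "X = mat k k (\<lambda>(i, t). if t < m then f i (e t) else 0)"
  define Y :: "complex mat" where "Y = mat k k (\<lambda>(t, j). if t < m then g j (e t) else 0)"
  have X: "X \<in> carrier_mat k k" and Y: "Y \<in> carrier_mat k k" by (simp_all add: X_def Y_def)
  have "X * Y = 1\<^sub>m k"
  proof (rule eq_matI)
    fix i j assume "i < dim_row (1\<^sub>m k :: complex mat)" "j < dim_col (1\<^sub>m k :: complex mat)"
    then have ij: "i < k" "j < k" by auto
    have "(X * Y) $$ (i, j) = (\<Sum>t<k. X $$ (i, t) * Y $$ (t, j))"
      by (rule index_mult_mat_sum[OF X Y ij])
    also have "\<dots> = (\<Sum>t\<in>{0..<m}. f i (e t) * g j (e t))"
      using mk ij by (intro sum.mono_neutral_cong_right) (auto simp: X_def Y_def)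
    also have "\<dots> = (\<Sum>x\<in>D. f i x * g j x)" by (rule sum.reindex_bij_betw[OF e])
    finally show "(X * Y) $$ (i, j) = 1\<^sub>m k $$ (i, j)" using ij orth by simp
  qed (simp_all add: X_def Y_def)
  then have "(Y * X) $$ (m, m) = 1" using mat_mult_left_right_inverse[OF X Y] mk by simp
  moreover have "(Y * X) $$ (m, m) = 0"
    using mk by (simp add: index_mult_mat_sum[OF Y X mk mk]) (simp add: Y_def)
  ultimately show False by simp
qed

lemma Irr_finite:
  fixes G (structure)
  assumes "group G" "finite (carrier G)"
  shows "finite (Irr G)"
proof (rule ccontr)
  interpret group G by fact
  assume "infinite (Irr G)"
  define m where "m = card (carrier G)"
  have "m > 0" using assms(2) by (auto simp: m_def card_gt_0_iff)
  obtain S where S: "S \<subseteq> Irr G" "finite S" "card S = Suc m"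
    using infinite_arbitrarily_large[OF \<open>infinite (Irr G)\<close>] by blast
  obtain c where c: "bij_betw c {0..<Suc m} S" using ex_bij_betw_nat_finite[OF S(2)] S(3) by auto
  have inj: "inj_on c {0..<Suc m}" using c by (rule bij_betw_imp_inj_on)
  have orth: "(\<Sum>x\<in>carrier G. c i x * (c j (inv x) / of_nat m)) = (if i = j then 1 else 0)"
    if "i < Suc m" "j < Suc m" for i j
  proof -
    have "c i \<in> Irr G" "c j \<in> Irr G" using bij_betw_apply[OF c] S(1) that by auto
    moreover have "c i = c j \<longleftrightarrow> i = j" using inj that by (simp add: inj_on_eq_iff)
    ultimately show ?thesis
      using Irr_orthogonality[OF assms(1), of "c i" "c j"] \<open>m > 0\<close>
      by (simp add: m_def sum_divide_distrib[symmetric])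
  qed
  have "Suc m \<le> card (carrier G)"
    by (rule card_ge_if_biorthogonal[OF assms(2), of _ c "\<lambda>j x. c j (inv x) / of_nat m"]) (rule orth)
  then show False by (simp add: m_def)
qed

section \<open>Irreducible characters not containing N in their kernel\<close>

lemma (in group) bij_betw_conj_normal:
  assumes "H \<lhd> G" "g \<in> carrier G"
  shows "bij_betw (\<lambda>x. g \<otimes> x \<otimes> inv g) H H"
proof -
  interpret normal H G by fact
  show ?thesis
  proof (rule bij_betwI[where g="\<lambda>x. inv g \<otimes> x \<otimes> g"])
    show "(\<lambda>x. g \<otimes> x \<otimes> inv g) \<in> H \<rightarrow> H" using assms(2) inv_op_closed2 by (auto simp: m_assoc)
    show "(\<lambda>x. inv g \<otimes> x \<otimes> g) \<in> H \<rightarrow> H" using assms(2) inv_op_closed1 by (auto simp: m_assoc)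
    fix x assume "x \<in> H"
    then have "x \<in> carrier G" using subset by blast
    then show "inv g \<otimes> (g \<otimes> x \<otimes> inv g) \<otimes> g = x" "g \<otimes> (inv g \<otimes> x \<otimes> g) \<otimes> inv g = x"
      using assms(2) by (simp_all add: m_assoc) (simp_all add: m_assoc[symmetric])
  qed
qed

lemma (in group) bij_betw_inv_subgroup:
  assumes "subgroup H G"
  shows "bij_betw (\<lambda>x. inv x) H H"
proof -
  interpret subgroup H G by fact
  show ?thesis by (intro bij_betwI[where g="\<lambda>x. inv x"]) auto
qed

lemma rep_sum_subgroup_absorbs:
  fixes G (structure)
  assumes "group G" "is_rep G n \<rho>" "subgroup H G" "h \<in> H"
  shows "\<rho> h * mat_sum n n \<rho> H = mat_sum n n \<rho> H"
proof -
  interpret group G by fact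
  have HG: "\<And>x. x \<in> H \<Longrightarrow> x \<in> carrier G" by (rule subgroup.mem_carrier[OF assms(3)])
  have "\<rho> h * mat_sum n n \<rho> H = mat_sum n n (\<lambda>x. \<rho> h * \<rho> x) H"
    by (rule mult_mat_sum_left) (use assms(2,4) HG in \<open>auto simp: is_rep_carrier\<close>)
  also have "\<dots> = mat_sum n n (\<lambda>x. \<rho> (h \<otimes> x)) H"
    by (rule mat_sum_cong) (use assms(2,4) HG in \<open>simp add: is_rep_mult\<close>)
  also have "\<dots> = mat_sum n n \<rho> H"
    by (rule mat_sum_reindex_bij_betw[OF bij_betw_mult_left_subgroup[OF assms(3,4)]])
  finally show ?thesis .
qed

lemma rep_sum_normal_commutes:
  fixes G (structure)
  assumes "group G" "is_rep G n \<rho>" "H \<lhd> G" "g \<in> carrier G"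
  shows "\<rho> g * mat_sum n n \<rho> H = mat_sum n n \<rho> H * \<rho> g"
proof -
  interpret group G by fact
  have HG: "\<And>x. x \<in> H \<Longrightarrow> x \<in> carrier G"
    by (rule subgroup.mem_carrier[OF normal_imp_subgroup[OF assms(3)]])
  have "\<rho> g * mat_sum n n \<rho> H = mat_sum n n (\<lambda>x. \<rho> g * \<rho> x) H"
    by (rule mult_mat_sum_left) (use assms(2,4) HG in \<open>auto simp: is_rep_carrier\<close>)
  also have "\<dots> = mat_sum n n (\<lambda>x. \<rho> ((g \<otimes> x \<otimes> inv g) \<otimes> g)) H"
  proof (rule mat_sum_cong)
    fix x assume "x \<in> H"
    then have "(g \<otimes> x \<otimes> inv g) \<otimes> g = g \<otimes> x" using assms(4) HG by (simp add: m_assoc)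
    then show "\<rho> g * \<rho> x = \<rho> ((g \<otimes> x \<otimes> inv g) \<otimes> g)"
      using assms(2,4) HG \<open>x \<in> H\<close> by (simp add: is_rep_mult)
  qed
  also have "\<dots> = mat_sum n n (\<lambda>x. \<rho> (x \<otimes> g)) H"
    by (rule mat_sum_reindex_bij_betw[OF bij_betw_conj_normal[OF assms(3,4)]])
  also have "\<dots> = mat_sum n n (\<lambda>x. \<rho> x * \<rho> g) H"
    by (rule mat_sum_cong) (use assms(2,4) HG in \<open>simp add: is_rep_mult\<close>)
  also have "\<dots> = mat_sum n n \<rho> H * \<rho> g"
    by (rule mult_mat_sum_right[symmetric]) (use assms(2,4) HG in \<open>auto simp: is_rep_carrier\<close>)
  finally show ?thesis .
qed

text \<open>The sum P of the matrices of H is an intertwiner whose image is the space of H-fixed vectors;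
  by irreducibility this space is either zero (then P = 0) or everything.\<close>
lemma sum_trace_normal_eq_zero_or_trivial:
  assumes "group G" "H \<lhd> G" and irr: "irreducible_rep G n \<rho>"
  shows "(\<Sum>h\<in>H. mat_trace (\<rho> h)) = 0 \<or> (\<forall>h\<in>H. \<rho> h = 1\<^sub>m n)"
proof -
  have \<rho>: "is_rep G n \<rho>" using irr by (simp add: irreducible_rep_def)
  have H: "subgroup H G" using assms(2) by (rule normal_imp_subgroup)
  have HG: "\<And>h. h \<in> H \<Longrightarrow> h \<in> carrier G" by (rule subgroup.mem_carrier[OF H])
  define P where "P = mat_sum n n \<rho> H"
  have P: "P \<in> carrier_mat n n" by (simp add: P_def)
  let ?W = "(*\<^sub>v) P ` carrier_vec n"
  have "?W = {0\<^sub>v n} \<or> ?W = carrier_vec n"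
    using irreducible_rep_invariant_subspace[OF irr is_subspace_image[OF P]]
      intertwiner_image_invariant[OF \<rho> \<rho> P] rep_sum_normal_commutes[OF assms(1) \<rho> assms(2)]
    unfolding P_def by blast
  then show ?thesis
  proof
    assume "?W = {0\<^sub>v n}"
    then have "P = 0\<^sub>m n n" by (intro eq_mat_on_vecI[OF P]) (auto simp: zero_mult_mat_vec)
    then have "mat_trace P = 0" by (simp add: mat_trace_def)
    then show ?thesis
      by (simp add: P_def mat_trace_mat_sum is_rep_carrier[OF \<rho>] HG)
  next
    assume W: "?W = carrier_vec n"
    have "\<rho> h = 1\<^sub>m n" if h: "h \<in> H" for h
    proof (rule eq_mat_on_vecI)
      fix v :: "complex vec" assume "v \<in> carrier_vec n"
      then obtain w where w: "w \<in> carrier_vec n" "v = P *\<^sub>v w" using W by (metis imageE)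
      have "\<rho> h *\<^sub>v v = (\<rho> h * P) *\<^sub>v w" using w P is_rep_carrier[OF \<rho> HG[OF h]] by simp
      also have "\<dots> = v" using rep_sum_subgroup_absorbs[OF assms(1) \<rho> H h] w by (simp add: P_def)
      finally show "\<rho> h *\<^sub>v v = 1\<^sub>m n *\<^sub>v v" using \<open>v \<in> carrier_vec n\<close> by simp
    qed (use is_rep_carrier[OF \<rho> HG[OF h]] in auto)
    then show ?thesis by blast
  qed
qed

lemma sum_Irr_rel_eq_zero:
  assumes "group G" "N \<lhd> G" "\<theta> \<in> Irr_rel G N"
  shows "(\<Sum>g\<in>N. \<theta> g) = 0"
proof -
  obtain n \<rho> where irr: "irreducible_rep G n \<rho>" and \<theta>: "\<theta> = character_of G \<rho>"
    and ker: "\<not> N \<subseteq> char_ker G \<theta>" using assms(3) by (auto simp: Irr_rel_def Irr_def)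
  have \<rho>: "is_rep G n \<rho>" using irr by (simp add: irreducible_rep_def)
  have NG: "N \<subseteq> carrier G" by (rule subgroup.subset[OF normal_imp_subgroup[OF assms(2)]])
  have "\<not> (\<forall>h\<in>N. \<rho> h = 1\<^sub>m n)"
  proof
    assume "\<forall>h\<in>N. \<rho> h = 1\<^sub>m n"
    then have "N \<subseteq> char_ker G \<theta>"
      using NG character_of_one[OF assms(1) \<rho>]
      by (auto simp: char_ker_def \<theta> character_of_def mat_trace_one_mat)
    with ker show False ..
  qed
  moreover have "(\<Sum>g\<in>N. \<theta> g) = (\<Sum>h\<in>N. mat_trace (\<rho> h))"
    using NG by (auto simp: \<theta> character_of_def intro!: sum.cong)
  ultimately show ?thesis using sum_trace_normal_eq_zero_or_trivial[OF assms(1,2) irr] by auto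
qed

lemma Irr_rel_if_vanishing_off:
  assumes "group G" "finite (carrier G)" "subgroup N G"
    and "\<chi> \<in> Irr G" "\<chi> \<noteq> principal_char G" "\<forall>x\<in>carrier G - N. \<chi> x = 0"
  shows "\<chi> \<in> Irr_rel G N"
proof -
  have "\<not> N \<subseteq> char_ker G \<chi>"
  proof
    assume ker: "N \<subseteq> char_ker G \<chi>"
    obtain d where d: "d > 0" "\<chi> \<one>\<^bsub>G\<^esub> = of_nat d" using Irr_one_eq_of_nat[OF assms(1,4)] .
    have NG: "N \<subseteq> carrier G" by (rule subgroup.subset[OF assms(3)])
    then have "finite N" using assms(2) by (rule finite_subset)
    have "N \<noteq> {}" using subgroup.one_closed[OF assms(3)] by blast
    have "0 = (\<Sum>g\<in>carrier G. \<chi> g)" using sum_Irr_eq_zero[OF assms(1,4,5)] by simp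
    also have "\<dots> = (\<Sum>g\<in>N. \<chi> g)"
      using assms(6) by (intro sum.mono_neutral_right[OF assms(2) NG]) auto
    also have "\<dots> = of_nat (card N) * of_nat d"
      using ker d(2) by (simp add: char_ker_def subset_iff)
    finally show False using d(1) \<open>finite N\<close> \<open>N \<noteq> {}\<close> by simp
  qed
  then show ?thesis using assms(4) by (simp add: Irr_rel_def)
qed

lemma sum_supported_const_off_one:
  fixes \<psi> f :: "'a \<Rightarrow> complex"
  assumes "finite S" "N \<subseteq> S" "e \<in> N" "\<forall>x\<in>S - N. \<psi> x = 0" "\<forall>x\<in>N - {e}. \<psi> x = c"
  shows "(\<Sum>x\<in>S. \<psi> x * f x) = (\<psi> e - c) * f e + c * (\<Sum>x\<in>N. f x)"
proof -
  have N: "finite N" using assms(1,2) by (rule finite_subset[rotated])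
  have "(\<Sum>x\<in>S. \<psi> x * f x) = (\<Sum>x\<in>N. \<psi> x * f x)"
    using assms(4) by (intro sum.mono_neutral_right[OF assms(1,2)]) auto
  also have "\<dots> = \<psi> e * f e + (\<Sum>x\<in>N - {e}. c * f x)"
    using assms(5) by (simp add: sum.remove[OF N assms(3)])
  also have "\<dots> = (\<psi> e - c) * f e + c * (\<Sum>x\<in>N. f x)"
    by (simp add: sum.remove[OF N assms(3), of f] sum_distrib_left algebra_simps)
  finally show ?thesis .
qed

lemma sum_Irr_combination_mult_inv:
  fixes G (structure)
  assumes "group G" "A \<subseteq> Irr G" "\<theta> \<in> Irr G" "\<theta> \<notin> A"
  shows "(\<Sum>g\<in>carrier G. (\<Sum>\<chi>\<in>A. a \<chi> * \<chi> g) * \<theta> (inv g)) = 0"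
proof -
  have "(\<Sum>g\<in>carrier G. (\<Sum>\<chi>\<in>A. a \<chi> * \<chi> g) * \<theta> (inv g))
      = (\<Sum>\<chi>\<in>A. a \<chi> * (\<Sum>g\<in>carrier G. \<chi> g * \<theta> (inv g)))"
    by (simp add: sum_distrib_left sum_distrib_right mult.assoc sum.swap[of _ "carrier G"])
  also have "\<dots> = 0"
  proof (intro sum.neutral ballI)
    fix \<chi> assume "\<chi> \<in> A"
    then have "\<chi> \<in> Irr G" "\<chi> \<noteq> \<theta>" using assms(2,4) by auto
    then show "a \<chi> * (\<Sum>g\<in>carrier G. \<chi> g * \<theta> (inv g)) = 0"
      using Irr_orthogonality[OF assms(1) _ assms(3)] by simp
  qed
  finally show ?thesis .
qed

lemma Re_sum_Irr_one_pos:
  assumes "group G" "finite A" "A \<noteq> {}" "A \<subseteq> Irr G" "\<forall>\<chi>\<in>A. \<alpha> \<chi> > 0"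
  shows "Re (\<Sum>\<chi>\<in>A. of_nat (\<alpha> \<chi>) * \<chi> \<one>\<^bsub>G\<^esub>) > 0"
proof -
  have "Re (of_nat (\<alpha> \<chi>) * \<chi> \<one>\<^bsub>G\<^esub>) > 0" if \<chi>: "\<chi> \<in> A" for \<chi>
  proof -
    obtain d where "d > 0" "\<chi> \<one>\<^bsub>G\<^esub> = of_nat d" using Irr_one_eq_of_nat[OF assms(1)] \<chi> assms(4) by blast
    then show ?thesis using assms(5) \<chi> by simp
  qed
  then show ?thesis unfolding Re_sum using assms(2,3) by (intro sum_pos) auto
qed

lemma Irr_rel_subset_if_constant_combination:
  fixes G (structure) and \<alpha> :: "('a \<Rightarrow> complex) \<Rightarrow> nat"
  assumes G: "group G" "finite (carrier G)" and N: "N \<lhd> G"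
    and A: "A \<noteq> {}" "A \<subseteq> Irr G" "principal_char G \<notin> A" "\<forall>\<chi>\<in>A. \<forall>x\<in>carrier G - N. \<chi> x = 0"
    and \<alpha>: "\<forall>\<chi>\<in>A. \<alpha> \<chi> > 0" "\<forall>x\<in>N - {\<one>}. (\<Sum>\<chi>\<in>A. of_nat (\<alpha> \<chi>) * \<chi> x) = c"
  shows "Irr_rel G N \<subseteq> A"
proof
  fix \<theta> assume \<theta>: "\<theta> \<in> Irr_rel G N"
  interpret group G by (rule G(1))
  show "\<theta> \<in> A"
  proof (rule ccontr)
    assume "\<theta> \<notin> A"
    define \<psi> where "\<psi> x = (\<Sum>\<chi>\<in>A. of_nat (\<alpha> \<chi>) * \<chi> x)" for x
    have sN: "subgroup N G" using N by (rule normal_imp_subgroup)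
    have NG: "N \<subseteq> carrier G" by (rule subgroup.subset[OF sN])
    have one: "\<one> \<in> N" by (rule subgroup.one_closed[OF sN])
    have \<theta>I: "\<theta> \<in> Irr G" using \<theta> by (simp add: Irr_rel_def)
    have pairing: "(\<Sum>g\<in>carrier G. \<psi> g * f g) = (\<psi> \<one> - c) * f \<one> + c * (\<Sum>g\<in>N. f g)" for f
      using A(4) \<alpha>(2) by (intro sum_supported_const_off_one[OF G(2) NG one]) (auto simp: \<psi>_def)
    have "(\<Sum>g\<in>N. \<theta> (inv g)) = (\<Sum>g\<in>N. \<theta> g)"
      using sum.reindex_bij_betw[OF bij_betw_inv_subgroup[OF sN]] .
    then have "(\<Sum>g\<in>N. \<theta> (inv g)) = 0" using sum_Irr_rel_eq_zero[OF G(1) N \<theta>] by simp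
    then have "(\<psi> \<one> - c) * \<theta> \<one> = 0"
      using pairing[of "\<lambda>g. \<theta> (inv g)"] sum_Irr_combination_mult_inv[OF G(1) A(2) \<theta>I \<open>\<theta> \<notin> A\<close>]
      by (simp add: \<psi>_def)
    moreover obtain d where "d > 0" "\<theta> \<one> = of_nat d" using Irr_one_eq_of_nat[OF G(1) \<theta>I] .
    ultimately have \<psi>c: "\<psi> \<one> = c" by simp
    have "(\<psi> \<one> - c) + c * of_nat (card N) = 0"
      using pairing[of "\<lambda>g. principal_char G (inv g)"] NG one
        sum_Irr_combination_mult_inv[OF G(1) A(2) principal_char_Irr[OF G(1)] A(3)]
      by (simp add: \<psi>_def principal_char_def subset_iff)
    then have "\<psi> \<one> = 0" using \<psi>c one finite_subset[OF NG G(2)] by (auto simp: card_gt_0_iff)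
    moreover have "Re (\<psi> \<one>) > 0"
      unfolding \<psi>_def using Re_sum_Irr_one_pos[OF G(1) finite_subset[OF A(2) Irr_finite[OF G]] A(1,2) \<alpha>(1)] .
    ultimately show False by simp
  qed
qed

theorem mainTheorem4:
  fixes G :: "('a, 'b) monoid_scheme" and N :: "'a set" and A :: "('a \<Rightarrow> complex) set"
  assumes "group G" and "finite (carrier G)"
    and "camina_pair G N"
    and "A \<noteq> {}" and "A \<subseteq> Irr G" and "principal_char G \<notin> A"
    and "\<forall>\<chi>\<in>A. \<forall>x\<in>carrier G - N. \<chi> x = 0"
    and "\<exists>\<alpha> :: ('a \<Rightarrow> complex) \<Rightarrow> nat. (\<forall>\<chi>\<in>A. \<alpha> \<chi> > 0) \<and>
           (\<exists>c. \<forall>x\<in>N - {\<one>\<^bsub>G\<^esub>}. (\<Sum>\<chi>\<in>A. of_nat (\<alpha> \<chi>) * \<chi> x) = c)"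
  shows "A = Irr_rel G N"
proof
  have N: "N \<lhd> G" using assms(3) by (simp add: camina_pair_def)
  show "A \<subseteq> Irr_rel G N"
  proof
    fix \<chi> assume "\<chi> \<in> A"
    then show "\<chi> \<in> Irr_rel G N"
      by (intro Irr_rel_if_vanishing_off[OF assms(1,2) normal_imp_subgroup[OF N]]) (use assms(5-7) in auto)
  qed
  obtain \<alpha> :: "('a \<Rightarrow> complex) \<Rightarrow> nat" and c where
    "\<forall>\<chi>\<in>A. \<alpha> \<chi> > 0" "\<forall>x\<in>N - {\<one>\<^bsub>G\<^esub>}. (\<Sum>\<chi>\<in>A. of_nat (\<alpha> \<chi>) * \<chi> x) = c"
    using assms(8) by blast
  then show "Irr_rel G N \<subseteq> A"
    by (rule Irr_rel_subset_if_constant_combination[OF assms(1,2) N assms(4-7)])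
qed

end
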